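(* Let $u\colon\mathcal{A}\times\mathbb{R}\to\mathbb{R}$ be a utility function which is strictly decreasing in the payment $z$ for each fixed alternative. Then: (1) The preference represented by $u$ is represented by some quasi-linear utility function if and only if there exist a function $v\colon\mathcal{A}\to\mathbb{R}$ and a strictly increasing function $\varphi\colon\mathbb{R}\to\mathbb{R}$ such that $u(a,z)=\varphi(v(a)-z)$ for all $a\in\mathcal{A}$, $z\in\mathbb{R}$. (2) The preference represented by $u$ is pos-represented by some quasi-linear utility function if and only if there exist a function $v\colon\mathcal{A}\to\mathbb{R}$ and a strictly increasing function $\varphi\colon\mathbb{R}\to\mathbb{R}$ such that $u(a,z)=\varphi(v(a)-z)$ for all $a\in\mathcal{A}$ and all $z\leqslant v(a)$.
   Context: $\mathcal{A}$ is a finite set of alternatives. A preference is a complete, transitive binary relation $\succcurlyeq$ on $\mathcal{A}\times\mathbb{R}$, where $(a,z)$ means alternative $a$ is chosen and the agent pays $z$. A function $u$ represents $\succcurlyeq$ if for all $a,b\in\mathcal{A}$, $z_a,z_b\in\mathbb{R}$: $(a,z_a)\succcurlyeq(b,z_b)\iff u(a,z_a)\geqslant u(b,z_b)$. A function $u$ pos-represents $\succcurlyeq$ if this equivalence holds for all $a,b,z_a,z_b$ with $u(a,z_a)\geqslant0$ or $u(b,z_b)\geqslant0$. A utility function is quasi-linear if $u(a,z)=v(a)-z$ for some $v\colon\mathcal{A}\to\mathbb{R}$. *)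

theory Defs
  imports Complex_Main
begin

text \<open>Alternatives form a finite type 'a; an outcome is a pair (a, z): alternative a, payment z.
  Utility functions are written curried: u a z = u(a,z).\<close>

definition pref_of :: "('a \<Rightarrow> real \<Rightarrow> real) \<Rightarrow> ('a \<times> real) \<Rightarrow> ('a \<times> real) \<Rightarrow> bool" where
  "pref_of u = (\<lambda>(a, za) (b, zb). u a za \<ge> u b zb)"

definition represents :: "('a \<Rightarrow> real \<Rightarrow> real) \<Rightarrow> (('a \<times> real) \<Rightarrow> ('a \<times> real) \<Rightarrow> bool) \<Rightarrow> bool" where
  "represents u R \<longleftrightarrow> (\<forall>a b za zb. R (a, za) (b, zb) \<longleftrightarrow> u a za \<ge> u b zb)"

definition pos_represents :: "('a \<Rightarrow> real \<Rightarrow> real) \<Rightarrow> (('a \<times> real) \<Rightarrow> ('a \<times> real) \<Rightarrow> bool) \<Rightarrow> bool" where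
  "pos_represents u R \<longleftrightarrow>
     (\<forall>a b za zb. (u a za \<ge> 0 \<or> u b zb \<ge> 0) \<longrightarrow> (R (a, za) (b, zb) \<longleftrightarrow> u a za \<ge> u b zb))"

definition quasi_linear :: "('a \<Rightarrow> real \<Rightarrow> real) \<Rightarrow> bool" where
  "quasi_linear u \<longleftrightarrow> (\<exists>v. \<forall>a z. u a z = v a - z)"

end

theory Submission
  imports Defs
begin

text \<open>If a quasi-linear w = v a - z represents the preference of u (possibly only on outcomes with
  w \<ge> 0), then u is constant on the level sets of w, so fixing a reference alternative a0 gives
  u a z = \<phi> (v a - z) with \<phi> t = u a0 (v a0 - t), which is strictly increasing because u is
  strictly decreasing in the payment. Conversely, composing with a strictly increasing \<phi> preserves
  the order; in the pos-represented case the outcomes with z > v a are handled by noting that they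
  are worse than every outcome with z \<le> v a, since u a z < u a (v a) = \<phi> 0.\<close>

lemma ex_quasi_linear_iff:
  "(\<exists>w. quasi_linear w \<and> P w) \<longleftrightarrow> (\<exists>v. P (\<lambda>a z. v a - z))"
  unfolding quasi_linear_def
proof
  assume "\<exists>w. (\<exists>v. \<forall>a z. w a z = v a - z) \<and> P w"
  then obtain w v where "\<And>a z. w a z = v a - z" "P w" by blast
  then have "w = (\<lambda>a z. v a - z)" by (intro ext) simp
  with \<open>P w\<close> show "\<exists>v. P (\<lambda>a z. v a - z)" by blast
qed auto

lemma represents_pref_of_eq:
  assumes "represents w (pref_of u)" "w a za = w b zb"
  shows "u a za = u b zb"
  using assms unfolding represents_def pref_of_def case_prod_conv
  by (metis order_antisym order_refl)

lemma pos_represents_pref_of_eq: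
  assumes "pos_represents w (pref_of u)" "0 \<le> w a za" "w a za = w b zb"
  shows "u a za = u b zb"
  using assms unfolding pos_represents_def pref_of_def case_prod_conv
  by (metis order_antisym order_refl)

lemma strict_mono_payment_reversed:
  fixes u :: "'a \<Rightarrow> real \<Rightarrow> real"
  assumes "\<And>z z'. z < z' \<Longrightarrow> u a z' < u a z"
  shows "strict_mono (\<lambda>t. u a (c - t))"
  by (rule strict_monoI) (simp add: assms)

lemma represents_strict_mono_comp:
  assumes "strict_mono \<phi>" "\<And>a z. u a z = \<phi> (w a z)"
  shows "represents w (pref_of u)"
  using assms unfolding represents_def pref_of_def by (simp add: strict_mono_less_eq)

lemma represents_quasi_linear_iff:
  fixes u :: "'a \<Rightarrow> real \<Rightarrow> real"
  assumes decr: "\<And>a z z'. z < z' \<Longrightarrow> u a z' < u a z"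
  shows "represents (\<lambda>a z. v a - z) (pref_of u) \<longleftrightarrow>
         (\<exists>\<phi>. strict_mono (\<phi> :: real \<Rightarrow> real) \<and> (\<forall>a z. u a z = \<phi> (v a - z)))"
proof
  assume rep: "represents (\<lambda>a z. v a - z) (pref_of u)"
  define a0 :: 'a where "a0 = undefined"
  have "u a z = u a0 (v a0 - (v a - z))" for a z
    by (rule represents_pref_of_eq[OF rep]) simp
  moreover have "strict_mono (\<lambda>t. u a0 (v a0 - t))"
    by (rule strict_mono_payment_reversed) (rule decr)
  ultimately show "\<exists>\<phi>. strict_mono \<phi> \<and> (\<forall>a z. u a z = \<phi> (v a - z))" by blast
qed (blast intro: represents_strict_mono_comp)

lemma pos_represents_quasi_linear_iff:
  fixes u :: "'a \<Rightarrow> real \<Rightarrow> real"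
  assumes decr: "\<And>a z z'. z < z' \<Longrightarrow> u a z' < u a z"
  shows "pos_represents (\<lambda>a z. v a - z) (pref_of u) \<longleftrightarrow>
         (\<exists>\<phi>. strict_mono (\<phi> :: real \<Rightarrow> real) \<and> (\<forall>a z. z \<le> v a \<longrightarrow> u a z = \<phi> (v a - z)))"
proof
  assume rep: "pos_represents (\<lambda>a z. v a - z) (pref_of u)"
  define a0 :: 'a where "a0 = undefined"
  have "u a z = u a0 (v a0 - (v a - z))" if "z \<le> v a" for a z
    by (rule pos_represents_pref_of_eq[OF rep]) (use that in simp_all)
  moreover have "strict_mono (\<lambda>t. u a0 (v a0 - t))"
    by (rule strict_mono_payment_reversed) (rule decr)
  ultimately show "\<exists>\<phi>. strict_mono \<phi> \<and> (\<forall>a z. z \<le> v a \<longrightarrow> u a z = \<phi> (v a - z))" by blast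
next
  assume "\<exists>\<phi>. strict_mono (\<phi> :: real \<Rightarrow> real) \<and> (\<forall>a z. z \<le> v a \<longrightarrow> u a z = \<phi> (v a - z))"
  then obtain \<phi> :: "real \<Rightarrow> real" where mono: "strict_mono \<phi>"
    and factor: "\<And>a z. z \<le> v a \<Longrightarrow> u a z = \<phi> (v a - z)"
    by blast
  have above: "\<phi> 0 \<le> u a z" if "z \<le> v a" for a z
    using that mono by (simp add: factor strict_mono_less_eq)
  have below: "u a z < \<phi> 0" if "v a < z" for a z
    using decr[of "v a" z a] that factor[of "v a" a] by simp
  show "pos_represents (\<lambda>a z. v a - z) (pref_of u)"
    unfolding pos_represents_def pref_of_def case_prod_conv
  proof (intro allI impI)
    fix a b za zb
    assume "0 \<le> v a - za \<or> 0 \<le> v b - zb"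
    then consider "za \<le> v a" "zb \<le> v b" | "za \<le> v a" "v b < zb" | "v a < za" "zb \<le> v b"
      by linarith
    then show "u b zb \<le> u a za \<longleftrightarrow> v b - zb \<le> v a - za"
    proof cases
      case 1
      then show ?thesis using mono by (simp add: factor strict_mono_less_eq)
    next
      case 2
      then show ?thesis using above[of za a] below[of b zb] by simp
    next
      case 3
      then show ?thesis using above[of zb b] below[of a za] by simp
    qed
  qed
qed

theorem theorem4:
  fixes u :: "'a::finite \<Rightarrow> real \<Rightarrow> real"
  assumes decr: "\<And>a z z'. z < z' \<Longrightarrow> u a z' < u a z"
  shows "((\<exists>w. quasi_linear w \<and> represents w (pref_of u)) \<longleftrightarrow>
           (\<exists>v \<phi>. strict_mono (\<phi> :: real \<Rightarrow> real) \<and> (\<forall>a z. u a z = \<phi> (v a - z))))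
       \<and> ((\<exists>w. quasi_linear w \<and> pos_represents w (pref_of u)) \<longleftrightarrow>
           (\<exists>v \<phi>. strict_mono (\<phi> :: real \<Rightarrow> real) \<and> (\<forall>a z. z \<le> v a \<longrightarrow> u a z = \<phi> (v a - z))))"
  unfolding ex_quasi_linear_iff
  by (simp add: represents_quasi_linear_iff[OF decr] pos_represents_quasi_linear_iff[OF decr])

end
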